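(* Let $\theta\in(0,1)$ be irrational with $\theta^2=1/m$, $m\in\mathbb{N}_+$. There exist constants $K>0$ and $0<\rho<1$ such that for all $k,n\ge1$, every $A\in\sigma(\ell_1,\dots,\ell_k)$ and every $B\in\sigma(\ell_{k+n},\ell_{k+n+1},\dots)$, \[ |\gamma_\theta(A\cap B)-\gamma_\theta(A)\gamma_\theta(B)|\le K\rho^n\,\gamma_\theta(A)\gamma_\theta(B). \] Consequently, with $\psi(n)=K\rho^n$, $\sum_{n=1}^\infty\psi(n)<\infty$.
   Context: Let $m\in\mathbb{N}_+$ not be a perfect square and $\theta=1/\sqrt m$. The map $T_\theta:[0,\theta]\to[0,\theta]$ is $T_\theta(x)=\frac1x-\theta\lfloor\frac{1}{\theta x}\rfloor$ for $x\in(0,\theta]$, $T_\theta(0)=0$. The digits are $\ell_n(x)=\lfloor \frac{1}{\theta T_\theta^{n-1}(x)}\rfloor$, $n\ge1$, with values in $\{m,m+1,\dots\}$. The probability measure $\gamma_\theta$ on $[0,\theta]$ has density $\frac{1}{\log(1+\theta^2)}\cdot\frac{\theta}{1+\theta x}$ with respect to Lebesgue measure and is $T_\theta$-invariant. $\sigma(\cdot)$ denotes the generated $\sigma$-algebra. *)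

theory Defs
  imports "HOL-Probability.Probability"
begin

text \<open>The map T_theta on [0,theta]; T_theta(0) = 0 (and 1/0 = 0 in HOL gives this automatically,
  but we make it explicit).\<close>
definition T_map :: "real \<Rightarrow> real \<Rightarrow> real" where
  "T_map \<theta> x = (if x = 0 then 0 else 1 / x - \<theta> * of_int \<lfloor>1 / (\<theta> * x)\<rfloor>)"

definition digit :: "real \<Rightarrow> nat \<Rightarrow> real \<Rightarrow> int" where
  "digit \<theta> n x = \<lfloor>1 / (\<theta> * ((T_map \<theta>) ^^ (n - 1)) x)\<rfloor>"

definition gamma_meas :: "real \<Rightarrow> real measure" where
  "gamma_meas \<theta> = density (restrict_space lborel {0..\<theta>})
      (\<lambda>x. ennreal (\<theta> / ((1 + \<theta> * x) * ln (1 + \<theta>\<^sup>2))))"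

definition digit_sigma :: "real \<Rightarrow> nat set \<Rightarrow> real set set" where
  "digit_sigma \<theta> I = sigma_sets {0..\<theta>}
      {digit \<theta> i -` D \<inter> {0..\<theta>} | i D. i \<in> I}"

end

theory Submission
  imports Defs "HOL-Real_Asymp.Real_Asymp"
begin

text \<open>
  The measure \<gamma> is T-invariant, and the operator dual to composition with T is
  PF f y = sum over i \<ge> m of w i y * f (u i y), where u i y = 1 / (i \<theta> + y) are the inverse
  branches of T and the weights w i are nonnegative and sum to 1. Each branch contracts by \<theta>^2
  and each weight is log-Lipschitz with constant 3 \<theta>, so PF maps functions that are
  log-Lipschitz with constant a to functions with constant 3 \<theta> + a \<theta>^2. For a = 6 \<theta> / (1 - \<theta>^2)
  this leaves room to subtract a fixed fraction \<delta> of the mean without leaving the cone, whence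
  PF^j f stays within O((1 - \<delta>)^j) of the mean of f, uniformly and relative to it. If A is
  determined by the first k digits, then PF^k 1_A lies in the cone; if B is determined by the
  digits from k + n on, then B = T^-(k+n-1) B', and \<gamma>(A \<inter> B) is the integral of
  PF^(n-1) (PF^k 1_A) over B', which gives the estimate with \<rho> = 1 - \<delta>.
\<close>

lemma ennreal_suminf_commute: "(\<Sum>i. \<Sum>j. f i j :: ennreal) = (\<Sum>j. \<Sum>i. f i j)"
proof -
  have "(\<Sum>i. \<Sum>j. f i j) = (\<integral>\<^sup>+i. (\<Sum>j. f i j) \<partial>count_space UNIV)"
    by (rule nn_integral_count_space_nat[symmetric])
  also have "\<dots> = (\<Sum>j. \<integral>\<^sup>+i. f i j \<partial>count_space UNIV)"
    by (rule nn_integral_suminf) auto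
  also have "\<dots> = (\<Sum>j. \<Sum>i. f i j)"
    by (simp add: nn_integral_count_space_nat)
  finally show ?thesis .
qed

lemma exp_bound_subtract:
  fixes a a' d q r s :: real
  assumes "0 < a" "0 \<le> a'" "a' \<le> a" "0 \<le> d" "0 \<le> q" "q \<le> s"
    and r: "r \<le> exp (a' * d) * s"
  shows "r - q * (1 - a' / a) \<le> exp (a * d) * (s - q * (1 - a' / a))"
proof -
  define t where "t = a' / a"
  define X where "X = exp (a * d)"
  have t: "0 \<le> t" "t \<le> 1"
    unfolding t_def using assms by auto
  have X: "1 \<le> X"
    unfolding X_def using assms by simp
  have "exp (t * (a * d)) \<le> (1 - t) + t * exp (a * d)"
    using convex_onD[OF exp_convex, of t 0 "a * d"] t by simp
  moreover have "t * (a * d) = a' * d"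
    unfolding t_def using assms by simp
  ultimately have "exp (a' * d) \<le> (1 - t) + t * X"
    unfolding X_def by simp
  then have "r \<le> ((1 - t) + t * X) * s"
    using r assms by (smt (verit) mult_right_mono)
  moreover have "0 \<le> (1 - t) * (X - 1) * (s - q)"
    using t X assms by simp
  ultimately show ?thesis
    unfolding t_def[symmetric] X_def[symmetric] by (simp add: algebra_simps)
qed

lemma abs_measure_diff_le_of_density_bounds:
  assumes "finite_measure M" and X: "X \<in> sets M" and B: "B \<in> sets M"
    and F: "F \<in> borel_measurable M"
    and X_eq: "emeasure M X = (\<integral>\<^sup>+x. indicator B x * F x \<partial>M)"
    and upper: "AE x in M. F x \<le> ennreal (c + e)"
    and lower: "AE x in M. ennreal c \<le> F x + ennreal e"
    and "0 \<le> c" "0 \<le> e"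
  shows "\<bar>measure M X - c * measure M B\<bar> \<le> e * measure M B"
proof -
  interpret finite_measure M by fact
  have "measure M X \<le> (c + e) * measure M B"
  proof -
    have "emeasure M X \<le> (\<integral>\<^sup>+x. ennreal (c + e) * indicator B x \<partial>M)"
      unfolding X_eq using upper
      by (intro nn_integral_mono_AE) (auto elim!: eventually_mono simp: indicator_def)
    also have "\<dots> = ennreal (c + e) * emeasure M B"
      using B by (rule nn_integral_cmult_indicator)
    finally show ?thesis
      using \<open>0 \<le> c\<close> \<open>0 \<le> e\<close>
      by (simp add: emeasure_eq_measure ennreal_mult[symmetric] del: ennreal_plus)
  qed
  moreover have "c * measure M B \<le> measure M X + e * measure M B"
  proof -
    have "ennreal c * emeasure M B = (\<integral>\<^sup>+x. ennreal c * indicator B x \<partial>M)"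
      using B by (rule nn_integral_cmult_indicator[symmetric])
    also have "\<dots> \<le> (\<integral>\<^sup>+x. indicator B x * F x + ennreal e * indicator B x \<partial>M)"
      using lower by (intro nn_integral_mono_AE) (auto elim!: eventually_mono simp: indicator_def)
    also have "\<dots> = emeasure M X + ennreal e * emeasure M B"
      using B F by (simp add: nn_integral_add X_eq nn_integral_cmult_indicator)
    finally show ?thesis
      using \<open>0 \<le> c\<close> \<open>0 \<le> e\<close>
      by (simp add: emeasure_eq_measure ennreal_mult[symmetric] ennreal_plus[symmetric] del: ennreal_plus)
  qed
  ultimately show ?thesis
    by (simp add: abs_le_iff algebra_simps)
qed

locale sqrt_cf =
  fixes \<theta> :: real and m :: nat
  assumes theta_pos: "0 < \<theta>" and theta_less_1: "\<theta> < 1" and theta_sq: "\<theta>\<^sup>2 = 1 / real m"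
begin

abbreviation T :: "real \<Rightarrow> real" where "T \<equiv> T_map \<theta>"
abbreviation \<gamma> :: "real measure" where "\<gamma> \<equiv> gamma_meas \<theta>"
abbreviation \<Omega> :: "real set" where "\<Omega> \<equiv> {0..\<theta>}"

lemma m_pos: "0 < m"
proof (rule ccontr)
  assume "\<not> 0 < m"
  then show False
    using theta_sq theta_pos by simp
qed

lemma m_theta_sq: "real m * \<theta>\<^sup>2 = 1"
  using theta_sq m_pos by simp

lemma theta_sq_less_1: "\<theta>\<^sup>2 < 1"
  using theta_pos theta_less_1 by (simp add: power_less_one_iff)

lemma inv_theta_le_denom:
  assumes "m \<le> i" "0 \<le> y"
  shows "1 / \<theta> \<le> real i * \<theta> + y"
proof -
  have "1 / \<theta> = real m * \<theta>"
    using m_theta_sq theta_pos by (simp add: field_simps power2_eq_square)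
  also have "\<dots> \<le> real i * \<theta>"
    using assms theta_pos by (simp add: mult_right_mono)
  finally show ?thesis
    using assms by linarith
qed

lemma inv_theta_less_denom: "m \<le> i \<Longrightarrow> 0 < y \<Longrightarrow> 1 / \<theta> < real i * \<theta> + y"
  using inv_theta_le_denom[of i 0] by simp

lemma branch_denom_pos: "m \<le> i \<Longrightarrow> 0 \<le> y \<Longrightarrow> 0 < real i * \<theta> + y"
  using inv_theta_le_denom theta_pos by (smt (verit) zero_less_divide_1_iff)

lemma T_mem: "x \<in> \<Omega> \<Longrightarrow> T x \<in> {0..<\<theta>}"
proof (cases "x = 0")
  case False
  then have "T x = \<theta> * frac (1 / (\<theta> * x))"
    using theta_pos by (simp add: T_map_def frac_def field_simps)
  then show ?thesis
    using theta_pos frac_lt_1[of "1 / (\<theta> * x)"] by simp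
qed (use theta_pos in \<open>simp add: T_map_def\<close>)

lemma T_pow_mem: "x \<in> \<Omega> \<Longrightarrow> (T ^^ j) x \<in> \<Omega>"
proof (induct j)
  case (Suc j)
  then show ?case
    using T_mem[of "(T ^^ j) x"] by simp
qed simp

definition branch :: "nat \<Rightarrow> real \<Rightarrow> real" where
  "branch i y = 1 / (real i * \<theta> + y)"

lemma branch_pos: "m \<le> i \<Longrightarrow> 0 \<le> y \<Longrightarrow> 0 < branch i y"
  using branch_denom_pos by (simp add: branch_def)

lemma branch_le: "m \<le> i \<Longrightarrow> 0 \<le> y \<Longrightarrow> branch i y \<le> \<theta>"
  using inv_theta_le_denom[of i y] theta_pos branch_denom_pos[of i y] unfolding branch_def
  by (simp add: divide_le_eq mult.commute pos_divide_le_eq)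

lemma branch_less: "m \<le> i \<Longrightarrow> 0 < y \<Longrightarrow> branch i y < \<theta>"
  using inv_theta_less_denom[of i y] theta_pos branch_denom_pos[of i y] unfolding branch_def
  by (simp add: divide_less_eq mult.commute pos_divide_less_eq)

lemma branch_mem: "m \<le> i \<Longrightarrow> y \<in> \<Omega> \<Longrightarrow> branch i y \<in> \<Omega>"
  using branch_pos branch_le by (auto intro: less_imp_le)

lemma floor_branch:
  assumes "m \<le> i" "0 \<le> y" "y < \<theta>"
  shows "\<lfloor>1 / (\<theta> * branch i y)\<rfloor> = int i"
proof -
  have "1 / (\<theta> * branch i y) = real i + y / \<theta>"
    using branch_denom_pos[OF assms(1,2)] theta_pos by (simp add: branch_def field_simps)
  then show ?thesis
    using assms theta_pos by (simp add: floor_eq_iff)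
qed

lemma T_branch: "m \<le> i \<Longrightarrow> 0 \<le> y \<Longrightarrow> y < \<theta> \<Longrightarrow> T (branch i y) = y"
  using floor_branch[of i y] branch_pos[of i y] branch_denom_pos[of i y] theta_pos
  by (simp add: T_map_def branch_def)

lemma digit_1_branch: "m \<le> i \<Longrightarrow> 0 \<le> y \<Longrightarrow> y < \<theta> \<Longrightarrow> digit \<theta> 1 (branch i y) = int i"
  using floor_branch by (simp add: digit_def)

lemma digit_shift:
  assumes "1 \<le> s"
  shows "digit \<theta> (s + j) x = digit \<theta> s ((T ^^ j) x)"
proof -
  have "s + j - 1 = (s - 1) + j"
    using assms by simp
  then show ?thesis
    by (simp add: digit_def funpow_add)
qed

definition gdens :: "real \<Rightarrow> real" where
  "gdens y = \<theta> / ((1 + \<theta> * y) * ln (1 + \<theta>\<^sup>2))"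

text \<open>The weight of branch \<open>i\<close> is \<open>gdens (branch i y) * \<bar>(branch i)' y\<bar> / gdens y\<close>.\<close>

definition weight :: "nat \<Rightarrow> real \<Rightarrow> real" where
  "weight i y = (1 + \<theta> * y) / ((real i * \<theta> + y) * ((real i + 1) * \<theta> + y))"

lemma gdens_nonneg: "0 \<le> y \<Longrightarrow> 0 \<le> gdens y"
  using theta_pos by (simp add: gdens_def)

lemma weight_nonneg: "0 \<le> y \<Longrightarrow> 0 \<le> weight i y"
  using theta_pos by (simp add: weight_def)

lemma gdens_branch:
  assumes "m \<le> i" "0 \<le> y"
  shows "gdens (branch i y) / (real i * \<theta> + y)\<^sup>2 = gdens y * weight i y"
proof -
  define a where "a = real i * \<theta> + y"
  define L where "L = ln (1 + \<theta>\<^sup>2)"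
  have "0 < a" "0 < a + \<theta>" "0 < L" "0 < 1 + \<theta> * y"
    unfolding a_def L_def using branch_denom_pos[OF assms] theta_pos assms
    by (auto intro: ln_gt_zero add_pos_nonneg)
  moreover have "(real i + 1) * \<theta> + y = a + \<theta>"
    unfolding a_def by (simp add: algebra_simps)
  ultimately have "gdens y * weight i y = \<theta> / (a * (a + \<theta>) * L)"
    unfolding gdens_def weight_def L_def[symmetric] a_def[symmetric] by simp
  moreover have "gdens (branch i y) = \<theta> * a / ((a + \<theta>) * L)"
    unfolding gdens_def branch_def a_def[symmetric] L_def[symmetric]
    using \<open>0 < a\<close> by (simp add: field_simps)
  ultimately show ?thesis
    unfolding a_def[symmetric] using \<open>0 < a\<close> by (simp add: power2_eq_square)
qed

lemma weight_sums:
  assumes "0 \<le> y"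
  shows "(\<lambda>j. weight (j + m) y) sums 1"
proof -
  define f where "f n = (1 + \<theta> * y) / \<theta> / (real (n + m) * \<theta> + y)" for n
  have "f \<longlonglongrightarrow> 0"
    unfolding f_def using theta_pos by real_asymp
  then have "(\<lambda>n. f n - f (Suc n)) sums (f 0 - 0)"
    by (rule telescope_sums')
  moreover have "f n - f (Suc n) = weight (n + m) y" for n
  proof -
    define a where "a = real (n + m) * \<theta> + y"
    have "0 < a"
      unfolding a_def using branch_denom_pos[of "n + m" y] assms by simp
    have "f n - f (Suc n) = (1 + \<theta> * y) / \<theta> / a - (1 + \<theta> * y) / \<theta> / (a + \<theta>)"
      unfolding f_def a_def by (simp add: algebra_simps)
    also have "\<dots> = (1 + \<theta> * y) / (a * (a + \<theta>))"
      using \<open>0 < a\<close> theta_pos by (simp add: divide_simps) (simp add: algebra_simps)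
    also have "\<dots> = weight (n + m) y"
      unfolding weight_def a_def by (simp add: algebra_simps)
    finally show ?thesis .
  qed
  moreover have "f 0 = 1"
  proof -
    have "\<theta> * (real m * \<theta> + y) = 1 + \<theta> * y"
      using m_theta_sq by (simp add: algebra_simps power2_eq_square)
    moreover have "0 < 1 + \<theta> * y"
      using theta_pos assms by (simp add: add_pos_nonneg)
    ultimately show ?thesis
      unfolding f_def by simp
  qed
  ultimately show ?thesis
    by simp
qed

lemma T_measurable[measurable]: "T \<in> borel_measurable borel"
  unfolding T_map_def by measurable

lemma T_pow_measurable[measurable]: "T ^^ j \<in> borel_measurable borel"
  by (induct j) (auto simp del: funpow.simps simp: funpow_Suc_right
      intro: measurable_compose[OF T_measurable])

lemma branch_measurable[measurable]: "branch i \<in> borel_measurable borel"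
  unfolding branch_def by measurable

lemma weight_measurable[measurable]: "weight i \<in> borel_measurable borel"
  unfolding weight_def by measurable

lemma gdens_measurable[measurable]: "gdens \<in> borel_measurable borel"
  unfolding gdens_def by measurable

lemma digit_measurable[measurable]: "digit \<theta> i \<in> borel \<rightarrow>\<^sub>M count_space UNIV"
  unfolding digit_def by measurable

lemma space_gamma: "space \<gamma> = \<Omega>"
  unfolding gamma_meas_def by simp

lemma sets_gamma: "sets \<gamma> = sets (restrict_space borel \<Omega>)"
  unfolding gamma_meas_def by (simp add: sets_restrict_space)

lemma sets_gammaI: "E \<in> sets borel \<Longrightarrow> E \<inter> \<Omega> \<in> sets \<gamma>"
  by (auto simp: sets_gamma sets_restrict_space_iff)

lemma sets_gammaD: "X \<in> sets \<gamma> \<Longrightarrow> X \<in> sets borel \<and> X \<subseteq> \<Omega>"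
  unfolding sets_gamma by (subst (asm) sets_restrict_space_iff) auto

lemma measurable_gammaI: "f \<in> borel \<rightarrow>\<^sub>M N \<Longrightarrow> f \<in> \<gamma> \<rightarrow>\<^sub>M N"
  unfolding measurable_cong_sets[OF sets_gamma refl] by (rule measurable_restrict_space1)

lemma nn_integral_gamma:
  assumes [measurable]: "F \<in> borel_measurable borel"
  shows "(\<integral>\<^sup>+x. F x \<partial>\<gamma>) = (\<integral>\<^sup>+x. ennreal (gdens x) * F x * indicator \<Omega> x \<partial>lborel)"
proof -
  have "(\<integral>\<^sup>+x. F x \<partial>\<gamma>) = (\<integral>\<^sup>+x. ennreal (gdens x) * F x \<partial>restrict_space lborel \<Omega>)"
    unfolding gamma_meas_def gdens_def[abs_def]
    by (subst nn_integral_density) (auto intro: measurable_restrict_space1)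
  also have "\<dots> = (\<integral>\<^sup>+x. ennreal (gdens x) * F x * indicator \<Omega> x \<partial>lborel)"
    by (subst nn_integral_restrict_space) auto
  finally show ?thesis .
qed

lemma emeasure_gamma_Omega: "emeasure \<gamma> \<Omega> = 1"
proof -
  define L where "L = ln (1 + \<theta>\<^sup>2)"
  have "0 < L"
    unfolding L_def using theta_pos by (intro ln_gt_zero) simp
  have "emeasure \<gamma> \<Omega> = (\<integral>\<^sup>+x. indicator \<Omega> x \<partial>\<gamma>)"
    using sets_gammaI[of UNIV] by simp
  also have "\<dots> = (\<integral>\<^sup>+x. ennreal (gdens x) * indicator {0..\<theta>} x \<partial>lborel)"
    by (subst nn_integral_gamma) (auto intro!: nn_integral_cong simp: indicator_def)
  also have "\<dots> = ln (1 + \<theta> * \<theta>) / L - ln (1 + \<theta> * 0) / L"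
  proof (rule nn_integral_FTC_Icc)
    fix x assume x: "x \<in> {0..\<theta>}"
    then have "0 < 1 + \<theta> * x"
      using theta_pos by (simp add: add_pos_nonneg)
    then show "((\<lambda>x. ln (1 + \<theta> * x) / L) has_real_derivative gdens x) (at x)"
      unfolding gdens_def L_def[symmetric] using \<open>0 < L\<close>
      by (auto intro!: derivative_eq_intros simp: divide_simps)
    show "0 \<le> gdens x"
      using x by (simp add: gdens_nonneg)
  qed (use theta_pos in auto)
  also have "\<dots> = 1"
    using \<open>0 < L\<close> unfolding L_def by (simp add: power2_eq_square)
  finally show ?thesis
    by simp
qed

lemma prob_space_gamma: "prob_space \<gamma>"
  by (rule prob_spaceI) (simp add: space_gamma emeasure_gamma_Omega)

end

sublocale sqrt_cf \<subseteq> gamma: prob_space "gamma_meas \<theta>"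
  by (rule prob_space_gamma)

context sqrt_cf
begin

subsection \<open>The Perron--Frobenius operator\<close>

definition PF :: "(real \<Rightarrow> ennreal) \<Rightarrow> real \<Rightarrow> ennreal" where
  "PF f y = (\<Sum>j. ennreal (weight (j + m) y) * f (branch (j + m) y))"

lemma PF_measurable[measurable]:
  assumes [measurable]: "f \<in> borel_measurable borel"
  shows "PF f \<in> borel_measurable borel"
  unfolding PF_def by measurable

lemma PF_pow_measurable[measurable]:
  "f \<in> borel_measurable borel \<Longrightarrow> (PF ^^ j) f \<in> borel_measurable borel"
  by (induct j) auto

lemma mem_cylinder_iff:
  assumes "m \<le> i"
  shows "x \<in> {branch i \<theta><..branch i 0} \<longleftrightarrow> 0 < x \<and> \<lfloor>1 / (\<theta> * x)\<rfloor> = int i"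
proof (cases "0 < x")
  case True
  have "0 < real i"
    using assms m_pos by simp
  then have "branch i \<theta> < x \<longleftrightarrow> 1 / (\<theta> * x) < real i + 1"
    and "x \<le> branch i 0 \<longleftrightarrow> real i \<le> 1 / (\<theta> * x)"
    using True theta_pos by (simp_all add: branch_def field_simps add_pos_pos)
  then show ?thesis
    using True by (auto simp: floor_eq_iff)
next
  case False
  then show ?thesis
    using branch_pos[OF assms, of \<theta>] theta_pos by auto
qed

lemma mem_Omega_iff_floor:
  "x \<in> \<Omega> \<and> x \<noteq> 0 \<longleftrightarrow> 0 < x \<and> int m \<le> \<lfloor>1 / (\<theta> * x)\<rfloor>"
proof (cases "0 < x")
  case True
  have "0 < \<theta> * real m"
    using theta_pos m_pos by simp
  then have "x \<le> \<theta> \<longleftrightarrow> x * (\<theta> * real m) \<le> \<theta> * (\<theta> * real m)"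
    by (rule mult_le_cancel_right_pos[symmetric])
  also have "\<dots> \<longleftrightarrow> real m \<le> 1 / (\<theta> * x)"
    using m_theta_sq True theta_pos by (simp add: field_simps power2_eq_square)
  finally have "x \<le> \<theta> \<longleftrightarrow> real m \<le> 1 / (\<theta> * x)" .
  then show ?thesis
    using True by (auto simp: le_floor_iff)
qed auto

lemma T_on_cylinder:
  "m \<le> i \<Longrightarrow> x \<in> {branch i \<theta><..branch i 0} \<Longrightarrow> T x = 1 / x - real i * \<theta>"
  using mem_cylinder_iff[of i x] by (simp add: T_map_def)

lemma indicator_Omega_eq_suminf:
  assumes "x \<noteq> 0"
  shows "(indicator \<Omega> x :: ennreal) = (\<Sum>j. indicator {branch (j + m) \<theta><..branch (j + m) 0} x)"
proof (cases "0 < x \<and> int m \<le> \<lfloor>1 / (\<theta> * x)\<rfloor>")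
  case True
  define z where "z = \<lfloor>1 / (\<theta> * x)\<rfloor>"
  define k where "k = nat z - m"
  have "int m \<le> z"
    using True unfolding z_def by simp
  then have "z = int (k + m)"
    unfolding k_def by simp
  then have "x \<in> {branch (j + m) \<theta><..branch (j + m) 0} \<longleftrightarrow> j = k" for j
    using mem_cylinder_iff[of "j + m" x] True unfolding z_def by auto
  then have "(\<Sum>j. indicator {branch (j + m) \<theta><..branch (j + m) 0} x)
      = (\<Sum>j. if j = k then 1 else 0 :: ennreal)"
    by (simp add: indicator_def of_bool_def)
  also have "\<dots> = 1"
    using sums_single[of k "\<lambda>_. 1 :: ennreal"] by (simp add: sums_iff)
  moreover have "x \<in> \<Omega>"
    using mem_Omega_iff_floor[of x] True by blast
  ultimately show ?thesis
    by simp
next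
  case False
  then have "x \<notin> {branch (j + m) \<theta><..branch (j + m) 0}" for j
    using mem_cylinder_iff[of "j + m" x] by auto
  moreover have "x \<notin> \<Omega>"
    using mem_Omega_iff_floor False assms by blast
  ultimately show ?thesis
    by simp
qed

lemma nn_integral_branch_subst:
  assumes i: "m \<le> i" and [measurable]: "\<Psi> \<in> borel_measurable borel"
  shows "(\<integral>\<^sup>+x. \<Psi> x * indicator {branch i \<theta>..branch i 0} x \<partial>lborel)
       = (\<integral>\<^sup>+y. \<Psi> (branch i y) * ennreal (1 / (real i * \<theta> + y)\<^sup>2) * indicator \<Omega> y \<partial>lborel)"
proof -
  define c where "c = real i * \<theta> + \<theta>"
  have "0 < c"
    unfolding c_def using branch_denom_pos[OF i, of \<theta>] theta_pos by simp
  define g where "g t = 1 / (c - t)" for t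
  define g' where "g' t = 1 / (c - t)\<^sup>2" for t
  have g_ends: "g 0 = branch i \<theta>" "g \<theta> = branch i 0"
    unfolding g_def branch_def c_def by simp_all
  have deriv: "(g has_real_derivative g' t) (at t)" if "t \<in> {0..\<theta>}" for t
  proof -
    have "c - t \<noteq> 0"
      using that \<open>0 < c\<close> unfolding c_def
      using branch_denom_pos[OF i, of 0] by auto
    then show ?thesis
      unfolding g_def g'_def
      by (auto intro!: derivative_eq_intros simp: power2_eq_square)
  qed
  have "continuous_on {0..\<theta>} g'"
    unfolding g'_def c_def using branch_denom_pos[OF i, of 0]
    by (intro continuous_intros) (auto simp: algebra_simps)
  then have "(\<integral>\<^sup>+x. \<Psi> x * indicator {branch i \<theta>..branch i 0} x \<partial>lborel)
      = (\<integral>\<^sup>+t. \<Psi> (g t) * g' t * indicator {0..\<theta>} t \<partial>lborel)"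
    unfolding g_ends[symmetric] using deriv theta_pos
    by (intro nn_integral_substitution_aux) (auto simp: g'_def)
  also have "\<dots> = ennreal \<bar>-1\<bar> * (\<integral>\<^sup>+y. \<Psi> (g (\<theta> + (-1) * y)) * g' (\<theta> + (-1) * y)
          * indicator {0..\<theta>} (\<theta> + (-1) * y) \<partial>lborel)"
    unfolding g_def g'_def by (rule nn_integral_real_affine) auto
  also have "\<dots> = (\<integral>\<^sup>+y. \<Psi> (g (\<theta> - y)) * g' (\<theta> - y) * indicator {0..\<theta>} (\<theta> - y) \<partial>lborel)"
    by simp
  also have "\<dots> = (\<integral>\<^sup>+y. \<Psi> (branch i y) * ennreal (1 / (real i * \<theta> + y)\<^sup>2) * indicator \<Omega> y \<partial>lborel)"
    by (intro nn_integral_cong)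
       (auto simp: g_def g'_def branch_def c_def indicator_def algebra_simps)
  finally show ?thesis .
qed

lemma nn_integral_cylinder:
  assumes i: "m \<le> i" and [measurable]: "f \<in> borel_measurable borel" "h \<in> borel_measurable borel"
  shows "(\<integral>\<^sup>+x. ennreal (gdens x) * h (1 / x - real i * \<theta>) * f x * indicator {branch i \<theta>..branch i 0} x \<partial>lborel)
       = (\<integral>\<^sup>+y. ennreal (gdens y) * (h y * (ennreal (weight i y) * f (branch i y))) * indicator \<Omega> y \<partial>lborel)"
proof -
  have "ennreal (gdens (branch i y)) * ennreal (1 / (real i * \<theta> + y)\<^sup>2)
      = ennreal (gdens y) * ennreal (weight i y)" if "y \<in> \<Omega>" for y
    using that gdens_branch[OF i, of y] gdens_nonneg[of y] weight_nonneg[of y i]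
      gdens_nonneg[of "branch i y"] branch_pos[OF i, of y]
    by (simp add: ennreal_mult[symmetric])
  moreover have "1 / branch i y - real i * \<theta> = y" if "y \<in> \<Omega>" for y
    using that branch_denom_pos[OF i, of y] by (simp add: branch_def)
  ultimately show ?thesis
    by (subst nn_integral_branch_subst[OF i])
       (auto intro!: nn_integral_cong simp: indicator_def mult_ac)
qed

lemma cylinder_decomposition:
  assumes "x \<noteq> 0" "\<forall>j. x \<noteq> branch (j + m) \<theta>"
  shows "ennreal (gdens x) * (h (T x) * f x) * indicator \<Omega> x
       = (\<Sum>j. ennreal (gdens x) * h (1 / x - real (j + m) * \<theta>) * f x
              * indicator {branch (j + m) \<theta>..branch (j + m) 0} x)"
proof -
  have "ennreal (gdens x) * (h (T x) * f x) * indicator {branch (j + m) \<theta><..branch (j + m) 0} x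
      = ennreal (gdens x) * h (1 / x - real (j + m) * \<theta>) * f x
        * indicator {branch (j + m) \<theta>..branch (j + m) 0} x" for j
    using T_on_cylinder[of "j + m" x] assms(2) by (auto simp: indicator_def mult_ac)
  then show ?thesis
    unfolding indicator_Omega_eq_suminf[OF assms(1)] ennreal_suminf_cmult[symmetric] by simp
qed

lemma nn_integral_T_PF:
  assumes [measurable]: "f \<in> borel_measurable borel" "h \<in> borel_measurable borel"
  shows "(\<integral>\<^sup>+x. h (T x) * f x \<partial>\<gamma>) = (\<integral>\<^sup>+y. h y * PF f y \<partial>\<gamma>)"
proof -
  have ae: "AE x in lborel. x \<noteq> 0 \<and> (\<forall>j. x \<noteq> branch (j + m) \<theta>)"
    by (intro AE_conjI AE_lborel_singleton) (simp add: AE_all_countable AE_lborel_singleton)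
  have "(\<integral>\<^sup>+x. h (T x) * f x \<partial>\<gamma>) = (\<integral>\<^sup>+x. ennreal (gdens x) * (h (T x) * f x) * indicator \<Omega> x \<partial>lborel)"
    by (rule nn_integral_gamma) measurable
  also have "\<dots> = (\<integral>\<^sup>+x. (\<Sum>j. ennreal (gdens x) * h (1 / x - real (j + m) * \<theta>) * f x
              * indicator {branch (j + m) \<theta>..branch (j + m) 0} x) \<partial>lborel)"
    by (intro nn_integral_cong_AE eventually_mono[OF ae] cylinder_decomposition) auto
  also have "\<dots> = (\<Sum>j. \<integral>\<^sup>+x. ennreal (gdens x) * h (1 / x - real (j + m) * \<theta>) * f x
              * indicator {branch (j + m) \<theta>..branch (j + m) 0} x \<partial>lborel)"
    by (rule nn_integral_suminf) measurable
  also have "\<dots> = (\<Sum>j. \<integral>\<^sup>+y. ennreal (gdens y) * (h y * (ennreal (weight (j + m) y)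
              * f (branch (j + m) y))) * indicator \<Omega> y \<partial>lborel)"
    using assms by (intro suminf_cong nn_integral_cylinder) auto
  also have "\<dots> = (\<integral>\<^sup>+y. ennreal (gdens y) * (h y * PF f y) * indicator \<Omega> y \<partial>lborel)"
    unfolding PF_def ennreal_suminf_cmult[symmetric] ennreal_suminf_multc[symmetric]
    by (rule nn_integral_suminf[symmetric]) measurable
  also have "\<dots> = (\<integral>\<^sup>+y. h y * PF f y \<partial>\<gamma>)"
    by (simp add: nn_integral_gamma)
  finally show ?thesis .
qed

lemma PF_cong:
  assumes "\<And>x. x \<in> \<Omega> \<Longrightarrow> f x = g x" "y \<in> \<Omega>"
  shows "PF f y = PF g y"
proof -
  have "f (branch (j + m) y) = g (branch (j + m) y)" for j
    using assms branch_mem[of "j + m" y] by simp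
  then show ?thesis
    unfolding PF_def by simp
qed

lemma PF_const:
  assumes "y \<in> \<Omega>"
  shows "PF (\<lambda>_. c) y = c"
proof -
  have "(\<Sum>j. ennreal (weight (j + m) y)) = ennreal (\<Sum>j. weight (j + m) y)"
    using assms weight_nonneg weight_sums by (intro suminf_ennreal2) (auto simp: sums_iff)
  also have "\<dots> = 1"
    using assms weight_sums by (simp add: sums_iff)
  finally show ?thesis
    unfolding PF_def by simp
qed

lemma PF_add: "PF (\<lambda>z. f z + g z) y = PF f y + PF g y"
  unfolding PF_def by (simp add: distrib_left suminf_add[symmetric])

lemma PF_add_const: "y \<in> \<Omega> \<Longrightarrow> PF (\<lambda>z. f z + c) y = PF f y + c"
  using PF_add[of f "\<lambda>_. c"] PF_const by simp

lemma PF_suminf: "PF (\<lambda>z. \<Sum>j. g j z) y = (\<Sum>j. PF (g j) y)"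
  unfolding PF_def ennreal_suminf_cmult[symmetric] by (rule ennreal_suminf_commute)

lemma PF_pow_const: "y \<in> \<Omega> \<Longrightarrow> (PF ^^ j) (\<lambda>_. c) y = c"
proof (induct j arbitrary: y)
  case (Suc j)
  then have "PF ((PF ^^ j) (\<lambda>_. c)) y = PF (\<lambda>_. c) y"
    by (intro PF_cong) auto
  then show ?case
    using PF_const Suc.prems by simp
qed simp

lemma PF_pow_suminf: "(PF ^^ k) (\<lambda>z. \<Sum>j. g j z) y = (\<Sum>j. (PF ^^ k) (g j) y)"
proof (induct k arbitrary: y)
  case (Suc k)
  then have "(PF ^^ k) (\<lambda>z. \<Sum>j. g j z) = (\<lambda>z. \<Sum>j. (PF ^^ k) (g j) z)"
    by auto
  then show ?case
    by (simp add: PF_suminf)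
qed simp

lemma nn_integral_T_pow_PF_pow:
  assumes [measurable]: "f \<in> borel_measurable borel" "h \<in> borel_measurable borel"
  shows "(\<integral>\<^sup>+x. h ((T ^^ j) x) * f x \<partial>\<gamma>) = (\<integral>\<^sup>+y. h y * (PF ^^ j) f y \<partial>\<gamma>)"
  using assms(1)
proof (induct j arbitrary: f)
  case (Suc j)
  note [measurable] = Suc.prems
  have "(\<integral>\<^sup>+x. h ((T ^^ Suc j) x) * f x \<partial>\<gamma>) = (\<integral>\<^sup>+x. h ((T ^^ j) (T x)) * f x \<partial>\<gamma>)"
    by (simp add: funpow_Suc_right del: funpow.simps)
  also have "\<dots> = (\<integral>\<^sup>+y. h ((T ^^ j) y) * PF f y \<partial>\<gamma>)"
    by (rule nn_integral_T_PF) measurable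
  also have "\<dots> = (\<integral>\<^sup>+y. h y * (PF ^^ Suc j) f y \<partial>\<gamma>)"
    by (simp add: Suc.hyps funpow_Suc_right del: funpow.simps)
  finally show ?case .
qed simp

lemma emeasure_T_pow_vimage:
  assumes [measurable]: "E \<in> sets borel"
  shows "emeasure \<gamma> ((T ^^ j) -` E \<inter> \<Omega>) = emeasure \<gamma> (E \<inter> \<Omega>)"
proof -
  have "emeasure \<gamma> ((T ^^ j) -` E \<inter> \<Omega>) = (\<integral>\<^sup>+x. indicator ((T ^^ j) -` E \<inter> \<Omega>) x \<partial>\<gamma>)"
    using sets_gammaI[OF measurable_sets_borel[OF T_pow_measurable assms]] by simp
  also have "\<dots> = (\<integral>\<^sup>+x. indicator E ((T ^^ j) x) * 1 \<partial>\<gamma>)"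
    by (intro nn_integral_cong) (auto simp: space_gamma indicator_def)
  also have "\<dots> = (\<integral>\<^sup>+y. indicator E y * (PF ^^ j) (\<lambda>_. 1) y \<partial>\<gamma>)"
    by (rule nn_integral_T_pow_PF_pow) measurable
  also have "\<dots> = (\<integral>\<^sup>+y. indicator (E \<inter> \<Omega>) y \<partial>\<gamma>)"
    by (intro nn_integral_cong) (auto simp: space_gamma indicator_def PF_pow_const)
  also have "\<dots> = emeasure \<gamma> (E \<inter> \<Omega>)"
    using sets_gammaI[OF assms] by simp
  finally show ?thesis .
qed

text \<open>
  \<open>T (branch i y) = y\<close> fails at \<open>y = \<theta>\<close>, so the digits of \<open>branch i y\<close> are controlled only at
  points whose orbit avoids the endpoints; these have full measure (\<open>AE_regular\<close>).
\<close>

definition regular :: "real set" where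
  "regular = {y. \<forall>j. (T ^^ j) y \<in> {0<..<\<theta>}}"

lemma regular_bounds: "y \<in> regular \<Longrightarrow> 0 < y \<and> y < \<theta>"
  unfolding regular_def by (auto dest: spec[of _ 0])

lemma regular_mem: "y \<in> regular \<Longrightarrow> y \<in> \<Omega>"
  by (auto dest: regular_bounds)

lemma branch_regular:
  assumes i: "m \<le> i" and y: "y \<in> regular"
  shows "branch i y \<in> regular"
  unfolding regular_def
proof (intro CollectI allI)
  fix j
  show "(T ^^ j) (branch i y) \<in> {0<..<\<theta>}"
  proof (cases j)
    case 0
    then show ?thesis
      using branch_pos[OF i] branch_less[OF i] regular_bounds[OF y] by simp
  next
    case (Suc j')
    then have "(T ^^ j) (branch i y) = (T ^^ j') y"
      using T_branch[OF i] regular_bounds[OF y] by (simp add: funpow_Suc_right del: funpow.simps)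
    then show ?thesis
      using y unfolding regular_def by simp
  qed
qed

lemma PF_eq_add_const_regular:
  assumes "\<And>x. x \<in> regular \<Longrightarrow> f x = g x + c" and y: "y \<in> regular"
  shows "PF f y = PF g y + c"
proof -
  have "f (branch (j + m) y) = g (branch (j + m) y) + c" for j
    using assms branch_regular[of "j + m" y] by simp
  then have "PF f y = PF (\<lambda>z. g z + c) y"
    unfolding PF_def by simp
  then show ?thesis
    using PF_add_const[OF regular_mem[OF y]] by simp
qed

lemma emeasure_gamma_endpoints: "emeasure \<gamma> ({0, \<theta>} \<inter> \<Omega>) = 0"
proof -
  have "emeasure \<gamma> ({0, \<theta>} \<inter> \<Omega>) = (\<integral>\<^sup>+x. ennreal (gdens x) * indicator ({0, \<theta>} \<inter> \<Omega>) x * indicator \<Omega> x \<partial>lborel)"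
    using sets_gammaI[of "{0, \<theta>}"] by (simp flip: nn_integral_gamma)
  also have "\<dots> = (\<integral>\<^sup>+(x::real). 0 \<partial>lborel)"
  proof (rule nn_integral_cong_AE)
    have "AE x in lborel. x \<noteq> 0 \<and> x \<noteq> \<theta>"
      by (intro AE_conjI AE_lborel_singleton)
    then show "AE x in lborel. ennreal (gdens x) * indicator ({0, \<theta>} \<inter> \<Omega>) x * indicator \<Omega> x = 0"
      by eventually_elim (simp add: indicator_def)
  qed
  finally show ?thesis
    by simp
qed

lemma AE_regular: "AE y in \<gamma>. y \<in> regular"
proof -
  have "AE y in \<gamma>. (T ^^ j) y \<notin> {0, \<theta>}" for j
  proof (rule AE_I')
    have "(T ^^ j) -` {0, \<theta>} \<inter> \<Omega> \<in> sets \<gamma>"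
      by (intro sets_gammaI measurable_sets_borel[OF T_pow_measurable]) simp
    then show "(T ^^ j) -` {0, \<theta>} \<inter> \<Omega> \<in> null_sets \<gamma>"
      using emeasure_T_pow_vimage[of "{0, \<theta>}" j] emeasure_gamma_endpoints by (simp add: null_sets_def)
  qed (auto simp: space_gamma)
  then have "AE y in \<gamma>. \<forall>j. (T ^^ j) y \<notin> {0, \<theta>}"
    by (simp add: AE_all_countable)
  then show ?thesis
    using AE_space
  proof eventually_elim
    case (elim y)
    then have "(T ^^ j) y \<in> \<Omega>" for j
      by (intro T_pow_mem) (simp add: space_gamma)
    with elim show ?case
      unfolding regular_def by (auto simp: less_le)
  qed
qed

lemma digit_Suc_branch:
  assumes "m \<le> i" "y \<in> regular" "1 \<le> s"
  shows "digit \<theta> (Suc s) (branch i y) = digit \<theta> s y"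
  using digit_shift[OF assms(3), of 1] T_branch[OF assms(1)] regular_bounds[OF assms(2)] by simp

definition digit_determined :: "nat \<Rightarrow> (real \<Rightarrow> 'a) \<Rightarrow> bool" where
  "digit_determined k F \<longleftrightarrow>
    (\<forall>x\<in>regular. \<forall>x'\<in>regular. (\<forall>i\<in>{1..k}. digit \<theta> i x = digit \<theta> i x') \<longrightarrow> F x = F x')"

lemma digit_determined_branch:
  assumes F: "digit_determined (Suc k) F" and i: "m \<le> i"
  shows "digit_determined k (\<lambda>y. F (branch i y))"
  unfolding digit_determined_def
proof (intro ballI impI)
  fix x x' assume x: "x \<in> regular" "x' \<in> regular"
    and same: "\<forall>s\<in>{1..k}. digit \<theta> s x = digit \<theta> s x'"
  have "digit \<theta> s (branch i x) = digit \<theta> s (branch i x')" if "s \<in> {1..Suc k}" for s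
  proof (cases "s = 1")
    case True
    then show ?thesis
      using digit_1_branch[OF i] regular_bounds[OF x(1)] regular_bounds[OF x(2)] by simp
  next
    case False
    with that obtain s' where "s = Suc s'" "s' \<in> {1..k}"
      by (cases s) auto
    then show ?thesis
      using digit_Suc_branch[OF i] x same by simp
  qed
  then show "F (branch i x) = F (branch i x')"
    using F branch_regular[OF i] x unfolding digit_determined_def by blast
qed

lemma digit_determined_indicator:
  assumes "A \<in> digit_sigma \<theta> {1..k}"
  shows "digit_determined k (indicator A)"
proof -
  have "\<forall>x\<in>regular. \<forall>x'\<in>regular.
      (\<forall>i\<in>{1..k}. digit \<theta> i x = digit \<theta> i x') \<longrightarrow> (x \<in> A \<longleftrightarrow> x' \<in> A)"
    using assms unfolding digit_sigma_def
  proof (induct rule: sigma_sets.induct)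
    case (Basic a)
    then obtain i D where a: "a = digit \<theta> i -` D \<inter> \<Omega>" "i \<in> {1..k}"
      by blast
    show ?case
    proof (intro ballI impI)
      fix x x' assume x: "x \<in> regular" "x' \<in> regular" "\<forall>i\<in>{1..k}. digit \<theta> i x = digit \<theta> i x'"
      then have "digit \<theta> i x = digit \<theta> i x'"
        using a(2) by blast
      then show "x \<in> a \<longleftrightarrow> x' \<in> a"
        unfolding a(1) using regular_mem[OF x(1)] regular_mem[OF x(2)] by simp
    qed
  next
    case (Compl a)
    show ?case
    proof (intro ballI impI)
      fix x x' assume "x \<in> regular" "x' \<in> regular" "\<forall>i\<in>{1..k}. digit \<theta> i x = digit \<theta> i x'"
      then show "x \<in> \<Omega> - a \<longleftrightarrow> x' \<in> \<Omega> - a"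
        using Compl.hyps(2) regular_mem by blast
    qed
  next
    case (Union a)
    then show ?case
      by blast
  qed simp
  then show ?thesis
    unfolding digit_determined_def by (metis indicator_simps)
qed

subsection \<open>Log-Lipschitz cones\<close>

definition log_lip :: "real \<Rightarrow> (real \<Rightarrow> ennreal) \<Rightarrow> bool" where
  "log_lip a f \<longleftrightarrow> (\<forall>x\<in>regular. \<forall>y\<in>regular. f x \<le> ennreal (exp (a * \<bar>x - y\<bar>)) * f y)"

lemma log_lip_mono:
  assumes "a \<le> a'" "log_lip a f"
  shows "log_lip a' f"
  unfolding log_lip_def
proof (intro ballI)
  fix x y assume xy: "x \<in> regular" "y \<in> regular"
  have "f x \<le> ennreal (exp (a * \<bar>x - y\<bar>)) * f y"
    using assms(2) xy unfolding log_lip_def by auto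
  also have "\<dots> \<le> ennreal (exp (a' * \<bar>x - y\<bar>)) * f y"
    using assms(1) by (intro mult_right_mono ennreal_leI) (auto intro: mult_right_mono)
  finally show "f x \<le> ennreal (exp (a' * \<bar>x - y\<bar>)) * f y" .
qed

lemma log_lip_const:
  assumes "0 \<le> a"
  shows "log_lip a (\<lambda>_. c)"
  unfolding log_lip_def
proof (intro ballI)
  fix x y
  have "ennreal 1 \<le> ennreal (exp (a * \<bar>x - y\<bar>))"
    using assms by (intro ennreal_leI) simp
  then show "c \<le> ennreal (exp (a * \<bar>x - y\<bar>)) * c"
    using mult_right_mono[of 1 _ c] by simp
qed

lemma log_lip_suminf:
  assumes "\<And>j. log_lip a (f j)"
  shows "log_lip a (\<lambda>x. \<Sum>j. f j x)"
  unfolding log_lip_def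
proof (intro ballI)
  fix x y assume xy: "x \<in> regular" "y \<in> regular"
  have "(\<Sum>j. f j x) \<le> (\<Sum>j. ennreal (exp (a * \<bar>x - y\<bar>)) * f j y)"
    using assms xy unfolding log_lip_def by (intro suminf_le) auto
  then show "(\<Sum>j. f j x) \<le> ennreal (exp (a * \<bar>x - y\<bar>)) * (\<Sum>j. f j y)"
    by simp
qed

lemma log_lip_mult_digit_determined_0:
  assumes "log_lip a h" "digit_determined 0 F"
  shows "log_lip a (\<lambda>x. h x * F x)"
  unfolding log_lip_def
proof (intro ballI)
  fix x y assume xy: "x \<in> regular" "y \<in> regular"
  moreover have "\<forall>i\<in>{1..0}. digit \<theta> i x = digit \<theta> i y"
    by simp
  ultimately have "F x = F y"
    using assms(2) unfolding digit_determined_def by blast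
  moreover have "h x \<le> ennreal (exp (a * \<bar>x - y\<bar>)) * h y"
    using assms(1) xy unfolding log_lip_def by simp
  ultimately show "h x * F x \<le> ennreal (exp (a * \<bar>x - y\<bar>)) * (h y * F y)"
    by (metis mult.assoc mult_right_mono zero_le)
qed

lemma branch_contraction:
  assumes i: "m \<le> i" and "x \<in> \<Omega>" "y \<in> \<Omega>"
  shows "\<bar>branch i x - branch i y\<bar> \<le> \<theta>\<^sup>2 * \<bar>x - y\<bar>"
proof -
  define a b where "a = real i * \<theta> + x" and "b = real i * \<theta> + y"
  have "0 < a" "0 < b"
    unfolding a_def b_def using branch_denom_pos[OF i] assms by auto
  have "1 / \<theta> \<le> a" "1 / \<theta> \<le> b"
    unfolding a_def b_def using inv_theta_le_denom[OF i] assms by auto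
  then have "(1 / \<theta>) * (1 / \<theta>) \<le> a * b"
    using theta_pos \<open>0 < a\<close> by (intro mult_mono) auto
  then have ab: "1 \<le> \<theta>\<^sup>2 * (a * b)"
    using theta_pos by (simp add: field_simps power2_eq_square)
  have "branch i x - branch i y = (b - a) / (a * b)"
    unfolding branch_def a_def[symmetric] b_def[symmetric]
    using \<open>0 < a\<close> \<open>0 < b\<close> by (simp add: field_simps)
  also have "b - a = y - x"
    unfolding a_def b_def by simp
  finally have "\<bar>branch i x - branch i y\<bar> = \<bar>x - y\<bar> / (a * b)"
    using \<open>0 < a\<close> \<open>0 < b\<close> by (simp add: abs_minus_commute)
  also have "\<dots> \<le> \<theta>\<^sup>2 * \<bar>x - y\<bar>"
    using ab \<open>0 < a\<close> \<open>0 < b\<close> mult_left_mono[OF ab, of "\<bar>x - y\<bar>"]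
    by (simp add: divide_le_eq mult_ac)
  finally show ?thesis .
qed

lemma shift_le_exp_dist:
  assumes "1 \<le> \<theta> * (c + y)"
  shows "c + x \<le> (c + y) * exp (\<theta> * \<bar>x - y\<bar>)"
proof -
  have "0 < c + y"
    using assms theta_pos by (smt (verit) mult_nonneg_nonpos)
  have "\<bar>x - y\<bar> \<le> (c + y) * (\<theta> * \<bar>x - y\<bar>)"
    using mult_right_mono[OF assms, of "\<bar>x - y\<bar>"] by (simp add: mult_ac)
  then have "c + x \<le> (c + y) * (1 + \<theta> * \<bar>x - y\<bar>)"
    using abs_ge_self[of "x - y"] by (simp add: algebra_simps)
  also have "\<dots> \<le> (c + y) * exp (\<theta> * \<bar>x - y\<bar>)"
    using \<open>0 < c + y\<close> by (intro mult_left_mono) auto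
  finally show ?thesis .
qed

lemma weight_log_lip:
  assumes i: "m \<le> i" and x: "x \<in> \<Omega>" and y: "y \<in> \<Omega>"
  shows "weight i x \<le> exp (3 * \<theta> * \<bar>x - y\<bar>) * weight i y"
proof -
  define E where "E = exp (\<theta> * \<bar>x - y\<bar>)"
  define a b where "a z = real i * \<theta> + z" and "b z = (real i + 1) * \<theta> + z" for z
  have a_ge: "1 \<le> \<theta> * a z" if "z \<in> \<Omega>" for z
    unfolding a_def using inv_theta_le_denom[OF i, of z] that theta_pos by (simp add: field_simps)
  moreover have "a z \<le> b z" for z
    unfolding a_def b_def using theta_pos by simp
  ultimately have b_ge: "1 \<le> \<theta> * b z" if "z \<in> \<Omega>" for z
    using that theta_pos by (meson mult_left_mono order_trans less_imp_le)
  have pos: "0 < a z" "0 < b z" "0 < 1 / \<theta> + z" if "z \<in> \<Omega>" for z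
    using a_ge[OF that] b_ge[OF that] that theta_pos
    by (smt (verit) mult_nonneg_nonpos, smt (verit) mult_nonneg_nonpos, simp add: add_pos_nonneg)
  have "0 < E"
    unfolding E_def by simp
  have "1 / \<theta> + x \<le> (1 / \<theta> + y) * E"
    unfolding E_def using y theta_pos by (intro shift_le_exp_dist) (simp add: algebra_simps)
  moreover have "a y \<le> a x * E" "b y \<le> b x * E"
    unfolding E_def using shift_le_exp_dist a_ge[OF x] b_ge[OF x]
    by (simp_all add: a_def b_def abs_minus_commute)
  ultimately have "(1 / \<theta> + x) * (a y * b y) \<le> ((1 / \<theta> + y) * E) * ((a x * E) * (b x * E))"
    using pos[OF x] pos[OF y] \<open>0 < E\<close> by (intro mult_mono mult_nonneg_nonneg) auto
  also have "\<dots> = E ^ 3 * ((1 / \<theta> + y) * (a x * b x))"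
    by (simp add: power3_eq_cube mult_ac)
  finally have "\<theta> * (1 / \<theta> + x) / (a x * b x) \<le> E ^ 3 * (\<theta> * (1 / \<theta> + y) / (a y * b y))"
    using pos[OF x] pos[OF y] theta_pos
    by (simp add: divide_simps zero_less_mult_iff mult_ac)
  moreover have "weight i z = \<theta> * (1 / \<theta> + z) / (a z * b z)" for z
    unfolding weight_def a_def b_def using theta_pos by (simp add: algebra_simps)
  moreover have "E ^ 3 = exp (3 * \<theta> * \<bar>x - y\<bar>)"
    unfolding E_def by (simp add: exp_of_nat_mult[symmetric] mult_ac)
  ultimately show ?thesis
    by simp
qed

lemma log_lip_branch_term:
  assumes i: "m \<le> i" and h: "log_lip a h" and "0 \<le> a"
  shows "log_lip (3 * \<theta> + a * \<theta>\<^sup>2) (\<lambda>y. ennreal (weight i y) * h (branch i y))"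
  unfolding log_lip_def
proof (intro ballI)
  fix x y assume xy: "x \<in> regular" "y \<in> regular"
  then have "x \<in> \<Omega>" "y \<in> \<Omega>"
    using regular_mem by auto
  have "h (branch i x) \<le> ennreal (exp (a * \<bar>branch i x - branch i y\<bar>)) * h (branch i y)"
    using h branch_regular[OF i] xy unfolding log_lip_def by auto
  also have "\<dots> \<le> ennreal (exp (a * \<theta>\<^sup>2 * \<bar>x - y\<bar>)) * h (branch i y)"
    using branch_contraction[OF i \<open>x \<in> \<Omega>\<close> \<open>y \<in> \<Omega>\<close>] \<open>0 \<le> a\<close>
    by (intro mult_right_mono ennreal_leI) (auto simp: mult_left_mono mult.assoc)
  finally have "h (branch i x) \<le> ennreal (exp (a * \<theta>\<^sup>2 * \<bar>x - y\<bar>)) * h (branch i y)" .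
  moreover have "ennreal (weight i x) \<le> ennreal (exp (3 * \<theta> * \<bar>x - y\<bar>)) * ennreal (weight i y)"
    using weight_log_lip[OF i \<open>x \<in> \<Omega>\<close> \<open>y \<in> \<Omega>\<close>] \<open>y \<in> \<Omega>\<close> weight_nonneg[of y i]
    by (simp add: ennreal_mult[symmetric])
  ultimately have "ennreal (weight i x) * h (branch i x)
      \<le> (ennreal (exp (3 * \<theta> * \<bar>x - y\<bar>)) * ennreal (weight i y))
        * (ennreal (exp (a * \<theta>\<^sup>2 * \<bar>x - y\<bar>)) * h (branch i y))"
    by (intro mult_mono) auto
  also have "\<dots> = ennreal (exp ((3 * \<theta> + a * \<theta>\<^sup>2) * \<bar>x - y\<bar>)) * (ennreal (weight i y) * h (branch i y))"
    by (simp add: ennreal_mult[symmetric] exp_add[symmetric] algebra_simps)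
  finally show "ennreal (weight i x) * h (branch i x)
      \<le> ennreal (exp ((3 * \<theta> + a * \<theta>\<^sup>2) * \<bar>x - y\<bar>)) * (ennreal (weight i y) * h (branch i y))" .
qed

lemma log_lip_PF: "log_lip a f \<Longrightarrow> 0 \<le> a \<Longrightarrow> log_lip (3 * \<theta> + a * \<theta>\<^sup>2) (PF f)"
  unfolding PF_def by (intro log_lip_suminf log_lip_branch_term) auto

lemma log_lip_PF_pow_mult:
  assumes "0 \<le> a" "3 * \<theta> + a * \<theta>\<^sup>2 \<le> a"
  shows "log_lip a h \<Longrightarrow> digit_determined k F \<Longrightarrow> log_lip a ((PF ^^ k) (\<lambda>x. h x * F x))"
proof (induct k arbitrary: h F)
  case 0
  then show ?case
    by (simp add: log_lip_mult_digit_determined_0)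
next
  case (Suc k)
  have "PF (\<lambda>x. h x * F x)
      = (\<lambda>y. \<Sum>j. ennreal (weight (j + m) y) * h (branch (j + m) y) * F (branch (j + m) y))"
    unfolding PF_def by (simp add: mult.assoc)
  then have "(PF ^^ Suc k) (\<lambda>x. h x * F x)
      = (PF ^^ k) (\<lambda>y. \<Sum>j. ennreal (weight (j + m) y) * h (branch (j + m) y) * F (branch (j + m) y))"
    by (simp add: funpow_Suc_right del: funpow.simps)
  also have "\<dots>
      = (\<lambda>y. \<Sum>j. (PF ^^ k) (\<lambda>y. ennreal (weight (j + m) y) * h (branch (j + m) y) * F (branch (j + m) y)) y)"
    by (intro ext PF_pow_suminf)
  finally have "(PF ^^ Suc k) (\<lambda>x. h x * F x) = \<dots>" .
  moreover have "log_lip a (\<lambda>y. ennreal (weight (j + m) y) * h (branch (j + m) y))" for j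
    using log_lip_branch_term[of "j + m" a h] Suc.prems assms by (auto intro: log_lip_mono)
  ultimately show ?case
    using Suc.hyps digit_determined_branch[OF Suc.prems(2)] by (simp add: log_lip_suminf)
qed

lemma log_lip_bounds:
  assumes f: "log_lip a f" "f \<in> borel_measurable borel" and "0 \<le> a"
    and int: "(\<integral>\<^sup>+x. f x \<partial>\<gamma>) = ennreal c" and "0 \<le> c" and x: "x \<in> regular"
  shows "f x \<le> ennreal (exp (a * \<theta>) * c)" "ennreal (exp (- (a * \<theta>)) * c) \<le> f x"
proof -
  have le: "f u \<le> ennreal (exp (a * \<theta>)) * f v" if "u \<in> regular" "v \<in> regular" for u v
  proof -
    have "\<bar>u - v\<bar> \<le> \<theta>"
      using regular_bounds[OF that(1)] regular_bounds[OF that(2)] by linarith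
    then have "ennreal (exp (a * \<bar>u - v\<bar>)) \<le> ennreal (exp (a * \<theta>))"
      using \<open>0 \<le> a\<close> by (intro ennreal_leI) (simp add: mult_left_mono)
    then show ?thesis
      using f(1) that unfolding log_lip_def by (meson mult_right_mono order_trans zero_le)
  qed
  have fm: "f \<in> borel_measurable \<gamma>"
    using f(2) by (rule measurable_gammaI)
  have "f x = (\<integral>\<^sup>+y. f x \<partial>\<gamma>)"
    by (simp add: gamma.emeasure_space_1)
  also have "\<dots> \<le> (\<integral>\<^sup>+y. ennreal (exp (a * \<theta>)) * f y \<partial>\<gamma>)"
    using AE_regular by (intro nn_integral_mono_AE) (auto elim!: eventually_mono intro: le[OF x])
  also have "\<dots> = ennreal (exp (a * \<theta>) * c)"
    using fm \<open>0 \<le> c\<close> by (simp add: nn_integral_cmult int ennreal_mult)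
  finally show "f x \<le> ennreal (exp (a * \<theta>) * c)" .
  have "ennreal c \<le> (\<integral>\<^sup>+y. ennreal (exp (a * \<theta>)) * f x \<partial>\<gamma>)"
    unfolding int[symmetric]
    using AE_regular by (intro nn_integral_mono_AE) (auto elim!: eventually_mono intro: le[OF _ x])
  also have "\<dots> = ennreal (exp (a * \<theta>)) * f x"
    by (simp add: gamma.emeasure_space_1)
  finally have "ennreal (exp (- (a * \<theta>))) * ennreal c
      \<le> ennreal (exp (- (a * \<theta>))) * (ennreal (exp (a * \<theta>)) * f x)"
    by (rule mult_left_mono) simp
  then show "ennreal (exp (- (a * \<theta>)) * c) \<le> f x"
    using \<open>0 \<le> c\<close> by (simp add: ennreal_mult[symmetric] mult.assoc[symmetric] mult_exp_exp)
qed

text \<open>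
  \<open>PF\<close> turns the constant \<open>a\<close> into \<open>3 \<theta> + a \<theta>^2\<close>; \<open>slope\<close> is chosen so that this is
  \<open>slope - 3 \<theta>\<close>, and \<open>gap\<close> is the fraction of the mean that can then be subtracted while
  staying in the cone of constant \<open>slope\<close>.
\<close>

definition slope :: real where
  "slope = 6 * \<theta> / (1 - \<theta>\<^sup>2)"

definition gap :: real where
  "gap = exp (- (slope * \<theta>)) * (1 - \<theta>\<^sup>2) / 2"

lemma slope_pos: "0 < slope"
  unfolding slope_def using theta_pos theta_sq_less_1 by simp

lemma slope_PF_eq: "3 * \<theta> + slope * \<theta>\<^sup>2 = slope - 3 * \<theta>"
proof -
  have "slope * (1 - \<theta>\<^sup>2) = 6 * \<theta>"
    unfolding slope_def using theta_sq_less_1 by simp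
  then show ?thesis
    by (simp add: algebra_simps)
qed

lemma slope_PF_le: "3 * \<theta> + slope * \<theta>\<^sup>2 \<le> slope"
  using slope_PF_eq theta_pos by simp

lemma gap_eq: "gap = exp (- (slope * \<theta>)) * (1 - (3 * \<theta> + slope * \<theta>\<^sup>2) / slope)"
proof -
  have "3 * \<theta> / slope = (1 - \<theta>\<^sup>2) / 2"
    unfolding slope_def using theta_sq_less_1 theta_pos by (simp add: field_simps)
  then show ?thesis
    unfolding slope_PF_eq gap_def using slope_pos by (simp add: diff_divide_distrib)
qed

lemma gap_pos: "0 < gap"
  unfolding gap_def using theta_sq_less_1 by simp

lemma gap_less_1: "gap < 1"
proof -
  have "0 \<le> (1 - \<theta>\<^sup>2) / 2" "(1 - \<theta>\<^sup>2) / 2 < 1"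
    using theta_sq_less_1 by (simp_all add: field_simps add_pos_nonneg)
  moreover have "exp (- (slope * \<theta>)) * ((1 - \<theta>\<^sup>2) / 2) \<le> (1 - \<theta>\<^sup>2) / 2"
    using slope_pos theta_pos \<open>0 \<le> (1 - \<theta>\<^sup>2) / 2\<close> by (intro mult_left_le_one_le) auto
  ultimately show ?thesis
    unfolding gap_def by simp
qed

lemma log_lip_diff_const:
  assumes g: "log_lip a' g" and "0 \<le> a'" "a' \<le> a" "0 < a" "0 \<le> q"
    and bounds: "\<And>y. y \<in> regular \<Longrightarrow> ennreal q \<le> g y \<and> g y < \<infinity>"
  shows "log_lip a (\<lambda>y. g y - ennreal (q * (1 - a' / a)))"
  unfolding log_lip_def
proof (intro ballI)
  fix x y assume x: "x \<in> regular" and y: "y \<in> regular"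
  obtain r where r: "g x = ennreal r" "0 \<le> r"
    using bounds[OF x] by (cases "g x") auto
  obtain s where s: "g y = ennreal s" "0 \<le> s"
    using bounds[OF y] by (cases "g y") auto
  have "q \<le> s"
    using bounds[OF y] s \<open>0 \<le> q\<close> by simp
  have "g x \<le> ennreal (exp (a' * \<bar>x - y\<bar>)) * g y"
    using g x y unfolding log_lip_def by blast
  then have "r \<le> exp (a' * \<bar>x - y\<bar>) * s"
    using r s by (simp add: ennreal_mult[symmetric])
  from exp_bound_subtract[OF \<open>0 < a\<close> \<open>0 \<le> a'\<close> \<open>a' \<le> a\<close> _ \<open>0 \<le> q\<close> \<open>q \<le> s\<close> this]
  have "r - q * (1 - a' / a) \<le> exp (a * \<bar>x - y\<bar>) * (s - q * (1 - a' / a))"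
    by simp
  moreover have "0 \<le> a' / a" "a' / a \<le> 1"
    using \<open>0 \<le> a'\<close> \<open>a' \<le> a\<close> \<open>0 < a\<close> by auto
  then have "0 \<le> q * (1 - a' / a)" "q * (1 - a' / a) \<le> q"
    using \<open>0 \<le> q\<close> by (simp_all add: mult_left_le)
  then have "0 \<le> q * (1 - a' / a)" "q * (1 - a' / a) \<le> s"
    using \<open>q \<le> s\<close> by simp_all
  ultimately show "g x - ennreal (q * (1 - a' / a))
      \<le> ennreal (exp (a * \<bar>x - y\<bar>)) * (g y - ennreal (q * (1 - a' / a)))"
    using r s by (simp add: ennreal_minus ennreal_mult[symmetric])
qed

lemma nn_integral_gamma_minus_const:
  assumes "g \<in> borel_measurable borel" "(\<integral>\<^sup>+x. g x \<partial>\<gamma>) = ennreal c"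
    and "AE y in \<gamma>. ennreal C \<le> g y" "0 \<le> C"
  shows "(\<integral>\<^sup>+x. g x - ennreal C \<partial>\<gamma>) = ennreal (c - C)"
proof -
  have "(\<integral>\<^sup>+x. g x - ennreal C \<partial>\<gamma>) = (\<integral>\<^sup>+x. g x \<partial>\<gamma>) - (\<integral>\<^sup>+x. ennreal C \<partial>\<gamma>)"
  proof (rule nn_integral_diff)
    show "g \<in> borel_measurable \<gamma>"
      using assms(1) by (rule measurable_gammaI)
  qed (use assms(3) in \<open>simp_all add: gamma.emeasure_space_1\<close>)
  then show ?thesis
    using assms(2,4) by (simp add: gamma.emeasure_space_1 ennreal_minus)
qed

lemma PF_subtract_gap:
  assumes f: "log_lip slope f" "f \<in> borel_measurable borel"
    and int: "(\<integral>\<^sup>+x. f x \<partial>\<gamma>) = ennreal c" and "0 \<le> c"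
  obtains g where "log_lip slope g" "g \<in> borel_measurable borel"
    "(\<integral>\<^sup>+x. g x \<partial>\<gamma>) = ennreal ((1 - gap) * c)"
    "\<And>y. y \<in> regular \<Longrightarrow> PF f y = g y + ennreal (gap * c)"
proof -
  define a' where "a' = 3 * \<theta> + slope * \<theta>\<^sup>2"
  have a': "0 \<le> a'" "a' \<le> slope"
    unfolding a'_def using theta_pos slope_pos slope_PF_le by auto
  have PF_f: "log_lip a' (PF f)"
    unfolding a'_def using log_lip_PF f slope_pos by simp
  have int_PF: "(\<integral>\<^sup>+x. PF f x \<partial>\<gamma>) = ennreal c"
    using nn_integral_T_PF[of f "\<lambda>_. 1"] int f by simp
  define q where "q = exp (- (slope * \<theta>)) * c"
  have "0 \<le> q"
    unfolding q_def using \<open>0 \<le> c\<close> by simp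
  have q_gap: "q * (1 - a' / slope) = gap * c"
    unfolding q_def a'_def gap_eq by simp
  have "q \<le> exp (- (a' * \<theta>)) * c"
    unfolding q_def using a' theta_pos \<open>0 \<le> c\<close> by (intro mult_right_mono) (simp_all add: mult_right_mono)
  then have bounds: "ennreal q \<le> PF f y \<and> PF f y < \<infinity>" if "y \<in> regular" for y
    using log_lip_bounds[OF PF_f _ a'(1) int_PF \<open>0 \<le> c\<close> that] f
    by (auto intro: order_trans[OF ennreal_leI] le_less_trans)
  have "gap * c \<le> q"
    unfolding q_gap[symmetric] using a' slope_pos \<open>0 \<le> q\<close> by (simp add: mult_left_le)
  then have gap_c_le: "ennreal (gap * c) \<le> PF f y" if "y \<in> regular" for y
    using bounds[OF that] by (auto intro: order_trans[OF ennreal_leI])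
  define g where "g y = PF f y - ennreal (gap * c)" for y
  show ?thesis
  proof
    show "log_lip slope g"
      unfolding g_def q_gap[symmetric]
      using log_lip_diff_const[OF PF_f a' slope_pos \<open>0 \<le> q\<close> bounds] by simp
    show g_meas: "g \<in> borel_measurable borel"
      unfolding g_def using f by measurable
    have "AE y in \<gamma>. ennreal (gap * c) \<le> PF f y"
      using AE_regular by eventually_elim (rule gap_c_le)
    then show "(\<integral>\<^sup>+x. g x \<partial>\<gamma>) = ennreal ((1 - gap) * c)"
      unfolding g_def using nn_integral_gamma_minus_const[OF _ int_PF] f gap_pos \<open>0 \<le> c\<close>
      by (simp add: algebra_simps)
    show "PF f y = g y + ennreal (gap * c)" if "y \<in> regular" for y
      unfolding g_def using diff_add_cancel_ennreal[OF gap_c_le[OF that]] by simp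
  qed
qed

lemma PF_pow_decomposition:
  assumes "log_lip slope f" "f \<in> borel_measurable borel"
    and "(\<integral>\<^sup>+x. f x \<partial>\<gamma>) = ennreal c" "0 \<le> c"
  shows "\<exists>g. log_lip slope g \<and> g \<in> borel_measurable borel
    \<and> (\<integral>\<^sup>+x. g x \<partial>\<gamma>) = ennreal ((1 - gap) ^ j * c)
    \<and> (\<forall>y\<in>regular. (PF ^^ j) f y = g y + ennreal ((1 - (1 - gap) ^ j) * c))"
proof (induct j)
  case 0
  show ?case
    using assms by (intro exI[of _ f]) simp
next
  case (Suc j)
  then obtain g where g: "log_lip slope g" "g \<in> borel_measurable borel"
      "(\<integral>\<^sup>+x. g x \<partial>\<gamma>) = ennreal ((1 - gap) ^ j * c)"
      "\<And>y. y \<in> regular \<Longrightarrow> (PF ^^ j) f y = g y + ennreal ((1 - (1 - gap) ^ j) * c)"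
    by blast
  have "0 \<le> (1 - gap) ^ j * c"
    using gap_less_1 \<open>0 \<le> c\<close> by simp
  then obtain g' where g': "log_lip slope g'" "g' \<in> borel_measurable borel"
      "(\<integral>\<^sup>+x. g' x \<partial>\<gamma>) = ennreal ((1 - gap) * ((1 - gap) ^ j * c))"
      "\<And>y. y \<in> regular \<Longrightarrow> PF g y = g' y + ennreal (gap * ((1 - gap) ^ j * c))"
    using PF_subtract_gap[OF g(1-3)] by blast
  define C where "C = (1 - (1 - gap) ^ j) * c"
  have "0 \<le> C"
    unfolding C_def using gap_pos gap_less_1 \<open>0 \<le> c\<close> by (simp add: power_le_one)
  have C_Suc: "gap * ((1 - gap) ^ j * c) + C = (1 - (1 - gap) ^ Suc j) * c"
    unfolding C_def by (simp add: algebra_simps)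
  have "(PF ^^ Suc j) f y = g' y + ennreal ((1 - (1 - gap) ^ Suc j) * c)" if y: "y \<in> regular" for y
  proof -
    have "(PF ^^ Suc j) f y = PF ((PF ^^ j) f) y"
      by simp
    also have "\<dots> = PF g y + ennreal C"
      by (rule PF_eq_add_const_regular[OF _ y]) (simp add: g(4) C_def)
    also have "\<dots> = g' y + (ennreal (gap * ((1 - gap) ^ j * c)) + ennreal C)"
      using g'(4)[OF y] by (simp add: add.assoc)
    also have "ennreal (gap * ((1 - gap) ^ j * c)) + ennreal C = ennreal ((1 - (1 - gap) ^ Suc j) * c)"
      unfolding C_Suc[symmetric] using \<open>0 \<le> C\<close> \<open>0 \<le> (1 - gap) ^ j * c\<close> gap_pos by simp
    finally show ?thesis .
  qed
  then show ?case
    using g'(1-3) by (intro exI[of _ g']) (simp add: mult.assoc)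
qed

lemma PF_pow_bounds:
  assumes "log_lip slope f" "f \<in> borel_measurable borel"
    and "(\<integral>\<^sup>+x. f x \<partial>\<gamma>) = ennreal c" "0 \<le> c" and y: "y \<in> regular"
  shows "(PF ^^ j) f y \<le> ennreal (c + exp (slope * \<theta>) * (1 - gap) ^ j * c)"
    "ennreal c \<le> (PF ^^ j) f y + ennreal (exp (slope * \<theta>) * (1 - gap) ^ j * c)"
proof -
  obtain g where g: "log_lip slope g" "g \<in> borel_measurable borel"
      "(\<integral>\<^sup>+x. g x \<partial>\<gamma>) = ennreal ((1 - gap) ^ j * c)"
      "(PF ^^ j) f y = g y + ennreal ((1 - (1 - gap) ^ j) * c)"
    using PF_pow_decomposition[OF assms(1-4), of j] y by blast
  define r where "r = (1 - gap) ^ j * c"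
  have "0 \<le> r" "r \<le> c"
    unfolding r_def using gap_pos gap_less_1 \<open>0 \<le> c\<close> by (auto simp: power_le_one mult_left_le_one_le)
  have "r \<le> exp (slope * \<theta>) * r"
    using \<open>0 \<le> r\<close> slope_pos theta_pos by (simp add: mult_le_cancel_right1)
  have "g y \<le> ennreal (exp (slope * \<theta>) * r)"
    using log_lip_bounds(1)[OF g(1,2) _ g(3) _ y] slope_pos \<open>0 \<le> r\<close> unfolding r_def by simp
  then have "(PF ^^ j) f y \<le> ennreal (exp (slope * \<theta>) * r) + ennreal (c - r)"
    unfolding g(4) r_def by (simp add: algebra_simps add_right_mono)
  also have "\<dots> = ennreal (exp (slope * \<theta>) * r + (c - r))"
    using \<open>0 \<le> r\<close> \<open>r \<le> c\<close> by (simp add: ennreal_plus[symmetric] del: ennreal_plus)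
  also have "\<dots> \<le> ennreal (c + exp (slope * \<theta>) * (1 - gap) ^ j * c)"
    using \<open>0 \<le> r\<close> by (intro ennreal_leI) (simp add: r_def mult.assoc)
  finally show "(PF ^^ j) f y \<le> ennreal (c + exp (slope * \<theta>) * (1 - gap) ^ j * c)" .
  have "ennreal c = ennreal (c - r) + ennreal r"
    using \<open>0 \<le> r\<close> \<open>r \<le> c\<close> by (simp add: ennreal_plus[symmetric] del: ennreal_plus)
  also have "\<dots> \<le> (PF ^^ j) f y + ennreal (exp (slope * \<theta>) * r)"
    unfolding g(4) r_def using \<open>r \<le> exp (slope * \<theta>) * r\<close>
    by (intro add_mono) (auto simp: algebra_simps r_def intro: ennreal_leI)
  finally show "ennreal c \<le> (PF ^^ j) f y + ennreal (exp (slope * \<theta>) * (1 - gap) ^ j * c)"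
    by (simp add: r_def mult.assoc)
qed

subsection \<open>Mixing\<close>

lemma digit_sigma_subset_sets: "digit_sigma \<theta> I \<subseteq> sets \<gamma>"
proof -
  have "digit \<theta> i -` D \<inter> \<Omega> \<in> sets \<gamma>" for i D
    using sets_gammaI[OF measurable_sets_borel[OF digit_measurable]] by simp
  then have "{digit \<theta> i -` D \<inter> space \<gamma> |i D. i \<in> I} \<subseteq> sets \<gamma>"
    unfolding space_gamma by blast
  then show ?thesis
    unfolding digit_sigma_def space_gamma[symmetric] by (rule sets.sigma_sets_subset)
qed

lemma digit_sigma_tail_vimage:
  assumes "B \<in> digit_sigma \<theta> {N + 1..}"
  shows "\<exists>B'. B' \<in> sets borel \<and> B = (T ^^ N) -` B' \<inter> \<Omega>"
  using assms unfolding digit_sigma_def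
proof (induct rule: sigma_sets.induct)
  case (Basic a)
  then obtain i D where a: "a = digit \<theta> i -` D \<inter> \<Omega>" and "N + 1 \<le> i"
    by blast
  then have "digit \<theta> i x = digit \<theta> (i - N) ((T ^^ N) x)" for x
    using digit_shift[of "i - N" N x] by simp
  then have "a = (T ^^ N) -` (digit \<theta> (i - N) -` D) \<inter> \<Omega>"
    unfolding a by auto
  moreover have "digit \<theta> (i - N) -` D \<in> sets borel"
    by (rule measurable_sets_borel[OF digit_measurable]) simp
  ultimately show ?case
    by blast
next
  case Empty
  show ?case
    by (intro exI[of _ "{}"]) simp
next
  case (Compl a)
  then obtain B' where "B' \<in> sets borel" "a = (T ^^ N) -` B' \<inter> \<Omega>"
    by blast
  then show ?case
    by (intro exI[of _ "- B'"]) auto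
next
  case (Union a)
  then obtain B' where "\<And>i. B' i \<in> sets borel" "\<And>i. a i = (T ^^ N) -` B' i \<inter> \<Omega>"
    by metis
  then show ?case
    by (intro exI[of _ "\<Union>i. B' i"]) auto
qed

lemma sets_gamma_inter_T_pow_vimage:
  assumes "A \<in> sets borel" "B \<in> sets borel"
  shows "A \<inter> ((T ^^ j) -` B \<inter> \<Omega>) \<in> sets \<gamma>"
proof -
  have "A \<inter> (T ^^ j) -` B \<in> sets borel"
    using assms(1) measurable_sets_borel[OF T_pow_measurable assms(2)] by (rule sets.Int)
  from sets_gammaI[OF this] show ?thesis
    by (simp add: Int_assoc)
qed

lemma emeasure_inter_T_pow_vimage:
  assumes [measurable]: "A \<in> sets borel" "B \<in> sets borel"
  shows "emeasure \<gamma> (A \<inter> ((T ^^ (k + j)) -` B \<inter> \<Omega>))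
       = (\<integral>\<^sup>+y. indicator (B \<inter> \<Omega>) y * (PF ^^ j) ((PF ^^ k) (indicator A)) y \<partial>\<gamma>)"
proof -
  have "emeasure \<gamma> (A \<inter> ((T ^^ (k + j)) -` B \<inter> \<Omega>))
      = (\<integral>\<^sup>+x. indicator (A \<inter> ((T ^^ (k + j)) -` B \<inter> \<Omega>)) x \<partial>\<gamma>)"
    using sets_gamma_inter_T_pow_vimage[OF assms] by simp
  also have "\<dots> = (\<integral>\<^sup>+x. indicator B ((T ^^ (k + j)) x) * indicator A x \<partial>\<gamma>)"
    by (intro nn_integral_cong) (auto simp: space_gamma indicator_def)
  also have "\<dots> = (\<integral>\<^sup>+y. indicator B y * (PF ^^ (k + j)) (indicator A) y \<partial>\<gamma>)"
    by (rule nn_integral_T_pow_PF_pow) auto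
  also have "(PF ^^ (k + j)) (indicator A) = (PF ^^ j) ((PF ^^ k) (indicator A))"
    by (simp only: add.commute[of k j] funpow_add comp_apply)
  also have "(\<integral>\<^sup>+y. indicator B y * (PF ^^ j) ((PF ^^ k) (indicator A)) y \<partial>\<gamma>)
      = (\<integral>\<^sup>+y. indicator (B \<inter> \<Omega>) y * (PF ^^ j) ((PF ^^ k) (indicator A)) y \<partial>\<gamma>)"
    by (intro nn_integral_cong) (simp add: space_gamma indicator_def)
  finally show ?thesis .
qed

lemma mixing:
  assumes A: "A \<in> digit_sigma \<theta> {1..k}" and B[measurable]: "B \<in> sets borel"
  shows "\<bar>measure \<gamma> (A \<inter> ((T ^^ (k + j)) -` B \<inter> \<Omega>)) - measure \<gamma> A * measure \<gamma> (B \<inter> \<Omega>)\<bar>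
    \<le> exp (slope * \<theta>) * (1 - gap) ^ j * measure \<gamma> A * measure \<gamma> (B \<inter> \<Omega>)"
proof -
  have A_sets: "A \<in> sets \<gamma>"
    using digit_sigma_subset_sets A by blast
  then have [measurable]: "A \<in> sets borel"
    using sets_gammaD by blast
  define F where "F = (PF ^^ k) (indicator A)"
  have F_meas[measurable]: "F \<in> borel_measurable borel"
    unfolding F_def by measurable
  have "log_lip slope ((PF ^^ k) (\<lambda>x. 1 * indicator A x))"
    using slope_pos slope_PF_le
    by (intro log_lip_PF_pow_mult log_lip_const digit_determined_indicator A) auto
  then have F_log_lip: "log_lip slope F"
    unfolding F_def by simp
  have F_int: "(\<integral>\<^sup>+x. F x \<partial>\<gamma>) = ennreal (measure \<gamma> A)"
    using nn_integral_T_pow_PF_pow[of "indicator A" "\<lambda>_. 1" k] A_sets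
    by (simp add: F_def gamma.emeasure_eq_measure)
  note bounds = PF_pow_bounds[OF F_log_lip F_meas F_int measure_nonneg, of _ j]
  have "\<bar>measure \<gamma> (A \<inter> ((T ^^ (k + j)) -` B \<inter> \<Omega>)) - measure \<gamma> A * measure \<gamma> (B \<inter> \<Omega>)\<bar>
      \<le> exp (slope * \<theta>) * (1 - gap) ^ j * measure \<gamma> A * measure \<gamma> (B \<inter> \<Omega>)"
  proof (rule abs_measure_diff_le_of_density_bounds)
    show "emeasure \<gamma> (A \<inter> ((T ^^ (k + j)) -` B \<inter> \<Omega>))
        = (\<integral>\<^sup>+y. indicator (B \<inter> \<Omega>) y * (PF ^^ j) F y \<partial>\<gamma>)"
      unfolding F_def by (rule emeasure_inter_T_pow_vimage) auto
    show "AE y in \<gamma>. (PF ^^ j) F y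
        \<le> ennreal (measure \<gamma> A + exp (slope * \<theta>) * (1 - gap) ^ j * measure \<gamma> A)"
      using AE_regular by eventually_elim (rule bounds(1))
    show "AE y in \<gamma>. ennreal (measure \<gamma> A)
        \<le> (PF ^^ j) F y + ennreal (exp (slope * \<theta>) * (1 - gap) ^ j * measure \<gamma> A)"
      using AE_regular by eventually_elim (rule bounds(2))
    show "0 \<le> exp (slope * \<theta>) * (1 - gap) ^ j * measure \<gamma> A"
      using gap_less_1 by simp
  qed (auto intro: gamma.finite_measure_axioms sets_gammaI measurable_gammaI
      sets_gamma_inter_T_pow_vimage)
  then show ?thesis
    by (simp add: mult_ac)
qed

lemma digit_sigma_mixing:
  assumes "1 \<le> n" and A: "A \<in> digit_sigma \<theta> {1..k}" and B: "B \<in> digit_sigma \<theta> {k + n..}"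
  shows "\<bar>measure \<gamma> (A \<inter> B) - measure \<gamma> A * measure \<gamma> B\<bar>
    \<le> exp (slope * \<theta>) * (1 - gap) ^ (n - 1) * measure \<gamma> A * measure \<gamma> B"
proof -
  have "B \<in> digit_sigma \<theta> {k + (n - 1) + 1..}"
    using B \<open>1 \<le> n\<close> by simp
  then obtain B' where B': "B' \<in> sets borel" "B = (T ^^ (k + (n - 1))) -` B' \<inter> \<Omega>"
    using digit_sigma_tail_vimage by blast
  have "measure \<gamma> B = measure \<gamma> (B' \<inter> \<Omega>)"
    using emeasure_T_pow_vimage[OF B'(1)] B'(2) by (simp add: measure_def)
  then show ?thesis
    using mixing[OF A B'(1), of "n - 1", folded B'(2)] by simp
qed

end

theorem proposition2p3:
  fixes \<theta> :: real and m :: nat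
  assumes "0 < \<theta>" "\<theta> < 1" "\<theta> \<notin> \<rat>" "m > 0" "\<theta>\<^sup>2 = 1 / real m"
  shows "\<exists>K>0. \<exists>\<rho>. 0 < \<rho> \<and> \<rho> < 1 \<and>
    (\<forall>k n A B. k \<ge> 1 \<longrightarrow> n \<ge> 1 \<longrightarrow>
       A \<in> digit_sigma \<theta> {1..k} \<longrightarrow> B \<in> digit_sigma \<theta> {k + n..} \<longrightarrow>
       \<bar>measure (gamma_meas \<theta>) (A \<inter> B) - measure (gamma_meas \<theta>) A * measure (gamma_meas \<theta>) B\<bar>
         \<le> K * \<rho> ^ n * measure (gamma_meas \<theta>) A * measure (gamma_meas \<theta>) B) \<and>
    summable (\<lambda>n. K * \<rho> ^ n)"
proof -
  interpret sqrt_cf \<theta> m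
    using assms by unfold_locales auto
  define \<rho> where "\<rho> = 1 - gap"
  define K where "K = exp (slope * \<theta>) / \<rho>"
  have \<rho>: "0 < \<rho>" "\<rho> < 1"
    unfolding \<rho>_def using gap_pos gap_less_1 by auto
  have K_\<rho>: "K * \<rho> ^ Suc n = exp (slope * \<theta>) * (1 - gap) ^ n" for n
    using \<rho> unfolding K_def \<rho>_def by simp
  have "\<bar>measure \<gamma> (A \<inter> B) - measure \<gamma> A * measure \<gamma> B\<bar> \<le> K * \<rho> ^ n * measure \<gamma> A * measure \<gamma> B"
    if "1 \<le> n" "A \<in> digit_sigma \<theta> {1..k}" "B \<in> digit_sigma \<theta> {k + n..}" for k n A B
    using digit_sigma_mixing[OF that] K_\<rho>[of "n - 1"] \<open>1 \<le> n\<close> by simp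
  moreover have "summable (\<lambda>n. K * \<rho> ^ n)"
    using \<rho> by (intro summable_mult summable_geometric) simp
  moreover have "0 < K"
    unfolding K_def using \<rho> by simp
  ultimately show ?thesis
    using \<rho> by blast
qed

end
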